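(* Let $p\ge5$ be prime, $n\ge1$, $a=(p-1)/(p-1,12)$, $b=(p+1)/(p+1,12)$. Define the $(n+1)\times(n+1)$ matrix $M=(M_{ij})_{i,j=0}^n$ by $M_{ij}=p^i/24$ if $j\ge n/2$ and $i\le j$; $M_{ij}=p^{2j-i}/24$ if $j\ge n/2$ and $i>j$; $M_{ij}=p^{n-i}/24$ if $j<n/2$ and $i\ge j$; $M_{ij}=p^{n+i-2j}/24$ if $j<n/2$ and $i<j$. Then $\det M=(ab)^np^{(n-1)(3n-1)/4}/24$ if $n$ is odd, and $\det M=(ab)^np^{n(3n-4)/4}/24$ if $n$ is even.
   Context: Note $ab=(p^2-1)/24$ for $p\ge5$. ($M_{ij}$ is the order of $\eta(p^i\tau)$ at a cusp of level $p^j$ of $X_0(p^n)$.) *)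

theory Defs
  imports "HOL-Computational_Algebra.Primes" "Jordan_Normal_Form.Determinant"
begin

text \<open>The matrix M = (M_ij), i,j = 0..n, of orders of eta(p^i tau) at cusps of level p^j
  on X_0(p^n), as in the paper.  Entries are real; exponents are integers.\<close>
definition etaOrderMat :: "nat \<Rightarrow> nat \<Rightarrow> real mat" where
  "etaOrderMat p n = mat (n+1) (n+1) (\<lambda>(i,j).
     if n \<le> 2*j then
       (if i \<le> j then real p powi (int i) / 24
        else real p powi (2 * int j - int i) / 24)
     else
       (if j \<le> i then real p powi (int n - int i) / 24
        else real p powi (int n + int i - 2 * int j) / 24))"

end

theory Submission
  imports Defs
begin

text \<open>Row i of the matrix is p times row i + 1 strictly to the left of the diagonal, so
  subtracting 1/p times row i - 1 from row i (for i \<ge> 1), a unimodular row operation, leaves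
  an upper triangular matrix. Its diagonal consists of p^(c_0)/24 and the entries
  p^(c_i) (1 - p^-2)/24 for i \<ge> 1, where p^(c_j)/24 is the j-th diagonal entry of the
  original matrix. It remains to evaluate the sum of the c_j and to use
  ab = (p^2 - 1)/24, i.e. gcd(p - 1, 12) gcd(p + 1, 12) = 24 for p prime to 6.\<close>

definition unit_lower_bidiagonal_mat :: "nat \<Rightarrow> 'a::comm_ring_1 \<Rightarrow> 'a mat" where
  "unit_lower_bidiagonal_mat m r =
     mat m m (\<lambda>(i,k). if k = i then 1 else if k + 1 = i then - r else 0)"

lemma unit_lower_bidiagonal_mat_carrier [simp]:
  "unit_lower_bidiagonal_mat m r \<in> carrier_mat m m"
  by (simp add: unit_lower_bidiagonal_mat_def)

lemma det_unit_lower_bidiagonal_mat [simp]: "det (unit_lower_bidiagonal_mat m r) = 1"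
proof -
  have "det (unit_lower_bidiagonal_mat m r) = prod_list (diag_mat (unit_lower_bidiagonal_mat m r))"
    by (rule det_lower_triangular[where n = m]) (auto simp: unit_lower_bidiagonal_mat_def)
  also have "diag_mat (unit_lower_bidiagonal_mat m r) = replicate m 1"
    by (rule nth_equalityI) (auto simp: diag_mat_def unit_lower_bidiagonal_mat_def)
  finally show ?thesis by simp
qed

lemma unit_lower_bidiagonal_mat_mult_index:
  assumes "B \<in> carrier_mat m m'" "i < m" "j < m'"
  shows "(unit_lower_bidiagonal_mat m r * B) $$ (i,j) =
           (if i = 0 then B $$ (0,j) else B $$ (i,j) - r * B $$ (i-1,j))"
proof -
  have "(unit_lower_bidiagonal_mat m r * B) $$ (i,j) =
          (\<Sum>k<m. (if k = i then B $$ (k,j) else 0) + (if k + 1 = i then - r * B $$ (k,j) else 0))"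
    using assms by (auto simp: unit_lower_bidiagonal_mat_def scalar_prod_def atLeast0LessThan
        intro!: sum.cong)
  also have "\<dots> = (if i = 0 then B $$ (0,j) else B $$ (i,j) - r * B $$ (i-1,j))"
    using assms by (cases i) (auto simp: sum.distrib)
  finally show ?thesis .
qed

lemma power_int_sum:
  fixes x :: "'a::field"
  assumes "x \<noteq> 0"
  shows "x powi (\<Sum>i\<in>A. f i) = (\<Prod>i\<in>A. x powi f i)"
  by (induction A rule: infinite_finite_induct) (simp_all add: power_int_add assms)

definition column_decay_mat :: "'a::field \<Rightarrow> (nat \<Rightarrow> int) \<Rightarrow> nat \<Rightarrow> 'a mat" where
  "column_decay_mat x c m = mat m m (\<lambda>(i,j). x powi (c j - \<bar>int i - int j\<bar>))"

lemma column_decay_mat_dims [simp]: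
  "dim_row (column_decay_mat x c m) = m" "dim_col (column_decay_mat x c m) = m"
  by (simp_all add: column_decay_mat_def)

lemma det_column_decay_mat:
  fixes x :: "'a::field"
  assumes "x \<noteq> 0"
  shows "det (column_decay_mat x c (Suc n)) = x powi (\<Sum>j<Suc n. c j) * (1 - inverse x ^ 2) ^ n"
proof -
  define D where "D = column_decay_mat x c (Suc n)"
  define T where "T = unit_lower_bidiagonal_mat (Suc n) (inverse x) * D"
  have D: "D \<in> carrier_mat (Suc n) (Suc n)" by (simp add: D_def column_decay_mat_def)
  then have T: "T \<in> carrier_mat (Suc n) (Suc n)"
    by (simp add: T_def mult_carrier_mat[OF unit_lower_bidiagonal_mat_carrier])
  have T_index: "T $$ (i,j) = (if i = 0 then D $$ (0,j) else D $$ (i,j) - inverse x * D $$ (i-1,j))"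
    if "i < Suc n" "j < Suc n" for i j
    using unit_lower_bidiagonal_mat_mult_index[OF D that] by (simp add: T_def)
  have "upper_triangular T"
  proof (rule upper_triangularI)
    fix i j assume "j < i" "i < dim_row T"
    then have "x powi (c j - \<bar>int (i - 1) - int j\<bar>) = x * x powi (c j - \<bar>int i - int j\<bar>)"
      using assms by (simp add: of_nat_diff power_int_add_1' [symmetric] algebra_simps)
    with \<open>j < i\<close> \<open>i < dim_row T\<close> T show "T $$ (i,j) = 0"
      using assms by (simp add: T_index D_def column_decay_mat_def)
  qed
  then have "det T = (\<Prod>i<Suc n. T $$ (i,i))"
    using T by (simp add: det_upper_triangular diag_mat_def prod.distinct_set_conv_list[symmetric]
        atLeast0LessThan)
  also have "\<dots> = (\<Prod>i<Suc n. x powi c i * (if i = 0 then 1 else 1 - inverse x ^ 2))"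
  proof (rule prod.cong)
    fix i assume "i \<in> {..<Suc n}"
    moreover have "x powi (c i - 1) = x powi c i * inverse x"
      using assms by (simp add: power_int_diff field_simps)
    ultimately show "T $$ (i,i) = x powi c i * (if i = 0 then 1 else 1 - inverse x ^ 2)"
      by (auto simp: T_index D_def column_decay_mat_def algebra_simps power2_eq_square)
  qed simp
  also have "\<dots> = (\<Prod>i<Suc n. x powi c i) * (\<Prod>i<Suc n. if i = 0 then 1 else 1 - inverse x ^ 2)"
    by (rule prod.distrib)
  also have "\<dots> = x powi (\<Sum>j<Suc n. c j) * (1 - inverse x ^ 2) ^ n"
    by (simp only: power_int_sum[OF assms] prod.lessThan_Suc_shift) simp
  finally show ?thesis
    using det_mult[OF unit_lower_bidiagonal_mat_carrier D] by (simp add: T_def D_def)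
qed

definition eta_diag_exponent :: "nat \<Rightarrow> nat \<Rightarrow> nat" where
  "eta_diag_exponent n j = (if n \<le> 2 * j then j else n - j)"

lemma eta_diag_exponent_Suc_Suc: "eta_diag_exponent (Suc (Suc n)) (Suc j) = eta_diag_exponent n j + 1"
  by (auto simp: eta_diag_exponent_def)

lemma eta_diag_exponent_0: "eta_diag_exponent n 0 = n"
  by (simp add: eta_diag_exponent_def)

lemma sum_eta_diag_exponent:
  "4 * (\<Sum>j<Suc n. eta_diag_exponent n j) = 3 * n * n + 4 * n + (if odd n then 1 else 0)"
proof (induction n rule: nat_less_induct)
  case (1 n)
  show ?case
  proof (cases "n < 2")
    case True
    then show ?thesis by (auto simp: less_2_cases_iff eta_diag_exponent_def)
  next
    case False
    then obtain m where m: "n = Suc (Suc m)"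
      by (metis less_2_cases_iff not0_implies_Suc)
    have "(\<Sum>j<Suc n. eta_diag_exponent n j)
        = eta_diag_exponent n 0 + (\<Sum>j<Suc (Suc m). eta_diag_exponent n (Suc j))"
      unfolding m by (rule sum.lessThan_Suc_shift)
    also have "\<dots> = n + (\<Sum>j<Suc (Suc m). eta_diag_exponent m j + 1)"
      by (simp add: m eta_diag_exponent_Suc_Suc eta_diag_exponent_0)
    also have "\<dots> = (\<Sum>j<Suc m. eta_diag_exponent m j) + 3 * m + 5"
      by (simp add: m sum_Suc eta_diag_exponent_def[of m "Suc m"])
    finally show ?thesis
      using "1.IH" m by (simp add: algebra_simps)
  qed
qed

lemma sum_eta_diag_exponent_eq:
  assumes "n \<ge> 1"
  shows "(\<Sum>j<Suc n. eta_diag_exponent n j) =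
    2 * n + (if odd n then (n - 1) * (3 * n - 1) div 4 else n * (3 * n - 4) div 4)"
proof (cases "odd n")
  case True
  then obtain m where n: "n = 2 * m + 1" ..
  have "(n - 1) * (3 * n - 1) = 4 * (m * (3 * m + 1))"
    by (simp add: n algebra_simps)
  then show ?thesis
    using sum_eta_diag_exponent[of n] True by (simp add: n algebra_simps)
next
  case False
  with assms have "\<exists>m. n = 2 * m + 2" by presburger
  then obtain m where n: "n = 2 * m + 2" ..
  have "n * (3 * n - 4) = 4 * ((m + 1) * (3 * m + 1))"
    by (simp add: n algebra_simps)
  then show ?thesis
    using sum_eta_diag_exponent[of n] False by (simp add: n algebra_simps)
qed

lemma etaOrderMat_eq_smult_column_decay_mat:
  "etaOrderMat p n =
     (1 / 24) \<cdot>\<^sub>m column_decay_mat (real p) (\<lambda>j. int (eta_diag_exponent n j)) (Suc n)"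
  (is "_ = ?M")
proof (rule eq_matI)
  fix i j assume "i < dim_row ?M" "j < dim_col ?M"
  then show "etaOrderMat p n $$ (i,j) = ?M $$ (i,j)"
    by (auto simp: etaOrderMat_def column_decay_mat_def eta_diag_exponent_def
        intro!: arg_cong[where f = "power_int (real p)"])
qed (simp_all add: etaOrderMat_def column_decay_mat_def)

lemma gcd_pred_12_mult_gcd_succ_12:
  fixes p :: nat
  assumes "coprime p 6"
  shows "gcd (p - 1) 12 * gcd (p + 1) 12 = 24"
proof -
  have gcd_12_mod: "gcd m 12 = gcd (m mod 12) (12::nat)" for m
    by (metis gcd.commute gcd_red_nat)
  have "p mod 2 \<noteq> 0" "p mod 3 \<noteq> 0"
    using coprime_common_divisor_nat[OF assms, of 2] coprime_common_divisor_nat[OF assms, of 3]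
    by (auto simp flip: dvd_eq_mod_eq_0)
  moreover obtain q where q: "p = q + 1"
    using calculation by (metis Suc_eq_plus1 mod_0 not0_implies_Suc)
  ultimately have q_mod: "q mod 12 = 0 \<or> q mod 12 = 4 \<or> q mod 12 = 6 \<or> q mod 12 = 10"
    by presburger
  have "gcd (q + 2) 12 = gcd (q mod 12 + 2) 12"
    by (metis gcd_12_mod mod_add_left_eq)
  then have "gcd (p - 1) 12 * gcd (p + 1) 12 = gcd (q mod 12) 12 * gcd (q mod 12 + 2) 12"
    using q gcd_12_mod[of q] by (simp add: numeral_2_eq_2)
  also have "\<dots> = 24"
  proof -
    have "\<forall>r\<in>{0, 4, 6, 10}. gcd r 12 * gcd (r + 2) 12 = (24::nat)"
      by code_simp
    moreover have "q mod 12 \<in> {0, 4, 6, 10}"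
      using q_mod by simp
    ultimately show ?thesis by (rule bspec)
  qed
  finally show ?thesis .
qed

lemma pred_div_gcd_12_mult_succ_div_gcd_12:
  fixes p :: nat
  assumes "coprime p 6"
  shows "real ((p - 1) div gcd (p - 1) 12) * real ((p + 1) div gcd (p + 1) 12) * 24 = real p ^ 2 - 1"
proof -
  let ?a = "(p - 1) div gcd (p - 1) 12" and ?b = "(p + 1) div gcd (p + 1) 12"
  have "?a * ?b * 24 = ?a * ?b * (gcd (p - 1) 12 * gcd (p + 1) 12)"
    using assms by (simp only: gcd_pred_12_mult_gcd_succ_12)
  also have "\<dots> = (?a * gcd (p - 1) 12) * (?b * gcd (p + 1) 12)"
    by (simp only: ac_simps)
  also have "\<dots> = (p - 1) * (p + 1)"
    by simp
  finally have "real (?a * ?b * 24) = real ((p - 1) * (p + 1))" by (rule arg_cong)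
  moreover have "p \<ge> 1"
    using assms by (cases p) auto
  ultimately show ?thesis
    by (simp add: of_nat_diff power2_eq_square algebra_simps)
qed

lemma prime_imp_coprime_6:
  fixes p :: nat
  assumes "prime p" "p \<ge> 5"
  shows "coprime p 6"
proof (rule prime_imp_coprime[OF assms(1)])
  show "\<not> p dvd 6"
  proof
    assume "p dvd 6"
    then have "p dvd 2 \<or> p dvd 3"
      using assms(1) prime_dvd_mult_iff[of p 2 3] by simp
    with assms(2) show False by (auto dest: dvd_imp_le)
  qed
qed

theorem mainTheorem8:
  fixes p n :: nat
  assumes "prime p" "p \<ge> 5" "n \<ge> 1"
  defines "a \<equiv> (p - 1) div gcd (p - 1) 12"
      and "b \<equiv> (p + 1) div gcd (p + 1) 12"
  shows "det (etaOrderMat p n) =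
    (if odd n
     then (real a * real b) ^ n * real p ^ (((n - 1) * (3 * n - 1)) div 4) / 24
     else (real a * real b) ^ n * real p ^ ((n * (3 * n - 4)) div 4) / 24)"
proof -
  define e where "e = (if odd n then (n - 1) * (3 * n - 1) div 4 else n * (3 * n - 4) div 4)"
  have p: "real p \<noteq> 0" using assms(2) by simp
  have ab: "real a * real b * 24 = real p ^ 2 - 1"
    unfolding a_def b_def
    by (rule pred_div_gcd_12_mult_succ_div_gcd_12[OF prime_imp_coprime_6[OF assms(1,2)]])
  have "det (etaOrderMat p n) =
      (1 / 24) ^ Suc n * (real p powi (\<Sum>j<Suc n. int (eta_diag_exponent n j)) *
        (1 - inverse (real p) ^ 2) ^ n)"
    by (simp add: etaOrderMat_eq_smult_column_decay_mat det_column_decay_mat[OF p] del: power_Suc)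
  also have "\<dots> = real p ^ (2 * n + e) * (1 - inverse (real p) ^ 2) ^ n / 24 ^ Suc n"
    by (simp only: of_nat_sum[symmetric] sum_eta_diag_exponent_eq[OF assms(3)] e_def
        power_int_of_nat) (simp add: power_divide)
  also have "\<dots> = (real p ^ 2 * (1 - inverse (real p) ^ 2) / 24) ^ n * real p ^ e / 24"
    by (simp add: power_add power_mult_distrib power_divide mult_ac flip: power_mult)
  also have "real p ^ 2 * (1 - inverse (real p) ^ 2) / 24 = real a * real b"
    using p by (simp add: right_diff_distrib power_inverse flip: ab)
  finally show ?thesis by (simp add: e_def)
qed

end
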